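(* Let $g\in\mathbb{F}_q[t]$ be a square-free polynomial of odd degree, and assume $3\nmid q$ and $3\nmid q-1$. Then there are infinitely many cubic extensions $K$ of $\mathbb{F}_q(t)$ whose discriminant is relatively prime to $g$ such that $g$ is not Carmichael in $K$.
   Context: $\mathbb{F}_q$ is the finite field with $q$ elements. A finite ring $S$ is a Carmichael ring if $S$ is not a field and $a^{|S|}=a$ for every $a\in S$; an ideal $I$ of a ring $R$ is a Carmichael ideal if $R/I$ is a Carmichael ring. For a finite extension $K$ of $\mathbb{F}_q(t)$, $\mathcal{O}_K$ denotes the integral closure of $\mathbb{F}_q[t]$ in $K$, and an element $\alpha\in\mathcal{O}_K$ is Carmichael in $K$ if $\alpha\mathcal{O}_K$ is a Carmichael ideal of $\mathcal{O}_K$. The discriminant of $K$ is the discriminant ideal of $\mathcal{O}_K$ over $\mathbb{F}_q[t]$; "relatively prime to $g$" means no irreducible factor of $g$ divides it. *)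

theory Defs
  imports "HOL-Algebra.QuotRing"
    "HOL-Computational_Algebra.Polynomial_Factorial"
    "HOL-Computational_Algebra.Squarefree"
    "HOL-Library.Cardinality"
begin

text \<open>F_q is a finite field type 'a (q = CARD('a)); A = F_q[t] is 'a poly;
 F_q(t) is the fraction field 'a poly fract.  A cubic extension K of F_q(t) is presented
 (by the primitive element theorem for prime degree) as F_q(t)[x]/(f) for an irreducible
 cubic f; its elements are represented by the remainders p (degree p < degree f),
 with multiplication modulo f.\<close>

type_synonym 'a ffrac = "'a poly fract"

definition cubic_poly :: "'a::{finite,field} ffrac poly \<Rightarrow> bool" where
  "cubic_poly f \<longleftrightarrow> irreducible f \<and> degree f = 3"

definition ext_field :: "'a::{finite,field} ffrac poly \<Rightarrow> 'a ffrac poly ring" where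
  "ext_field f = \<lparr>carrier = {p. degree p < degree f}, monoid.mult = (\<lambda>p q. (p * q) mod f),
      one = 1, zero = 0, add = (+)\<rparr>"

definition embA :: "'a::{finite,field} poly \<Rightarrow> 'a ffrac poly" where
  "embA c = [:to_fract c:]"

definition integral_closure :: "'a::{finite,field} ffrac poly \<Rightarrow> 'a ffrac poly set" where
  "integral_closure f = {\<alpha>. degree \<alpha> < degree f \<and>
     (\<exists>h :: 'a poly poly. lead_coeff h = 1 \<and> poly (map_poly embA h) \<alpha> mod f = 0)}"

definition OK_ring :: "'a::{finite,field} ffrac poly \<Rightarrow> 'a ffrac poly ring" where
  "OK_ring f = \<lparr>carrier = integral_closure f, monoid.mult = (\<lambda>p q. (p * q) mod f),
      one = 1, zero = 0, add = (+)\<rparr>"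

definition principal_OK :: "'a::{finite,field} ffrac poly \<Rightarrow> 'a poly \<Rightarrow> 'a ffrac poly set" where
  "principal_OK f c = {(embA c * \<beta>) mod f | \<beta>. \<beta> \<in> integral_closure f}"

definition carmichael_ring :: "('b, 'c) ring_scheme \<Rightarrow> bool" where
  "carmichael_ring S \<longleftrightarrow> finite (carrier S) \<and> \<not> field S \<and>
     (\<forall>a \<in> carrier S. a [^]\<^bsub>S\<^esub> card (carrier S) = a)"

definition carmichael_ideal :: "('b, 'c) ring_scheme \<Rightarrow> 'b set \<Rightarrow> bool" where
  "carmichael_ideal R I \<longleftrightarrow> carmichael_ring (R Quot I)"

definition carmichael_in :: "'a::{finite,field} ffrac poly \<Rightarrow> 'a poly \<Rightarrow> bool" where
  "carmichael_in f c \<longleftrightarrow> carmichael_ideal (OK_ring f) (principal_OK f c)"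

definition ext_trace :: "'a::{finite,field} ffrac poly \<Rightarrow> 'a ffrac poly \<Rightarrow> 'a ffrac" where
  "ext_trace f \<alpha> = (\<Sum>i<degree f. coeff ((\<alpha> * monom 1 i) mod f) i)"

definition det3 :: "(nat \<Rightarrow> nat \<Rightarrow> 'b::comm_ring_1) \<Rightarrow> 'b" where
  "det3 M = M 0 0 * M 1 1 * M 2 2 + M 0 1 * M 1 2 * M 2 0 + M 0 2 * M 1 0 * M 2 1
          - M 0 2 * M 1 1 * M 2 0 - M 0 0 * M 1 2 * M 2 1 - M 0 1 * M 1 0 * M 2 2"

definition disc3 :: "'a::{finite,field} ffrac poly \<Rightarrow> (nat \<Rightarrow> 'a ffrac poly) \<Rightarrow> 'a ffrac" where
  "disc3 f a = det3 (\<lambda>i j. ext_trace f ((a i * a j) mod f))"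

text \<open>The discriminant ideal of O_K over A: the A-ideal generated by all d(a_0,a_1,a_2)
 with a_i in O_K (for a PID this is generated by the discriminant of an A-basis).\<close>
definition disc_ideal :: "'a::{finite,field} ffrac poly \<Rightarrow> 'a poly set" where
  "disc_ideal f = {d. \<exists>n (c :: nat \<Rightarrow> 'a poly) (a :: nat \<Rightarrow> nat \<Rightarrow> 'a ffrac poly).
      (\<forall>k<n. \<forall>i<3. a k i \<in> integral_closure f) \<and>
      to_fract d = (\<Sum>k<n. to_fract (c k) * disc3 f (a k))}"

definition rel_prime_to :: "'a::{finite,field} poly set \<Rightarrow> 'a poly \<Rightarrow> bool" where
  "rel_prime_to I g \<longleftrightarrow> (\<forall>p. irreducible p \<and> p dvd g \<longrightarrow> \<not> (\<forall>d\<in>I. p dvd d))"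

definition ext_iso :: "'a::{finite,field} ffrac poly \<Rightarrow> 'a ffrac poly \<Rightarrow> bool" where
  "ext_iso f h \<longleftrightarrow> (\<exists>\<phi>. \<phi> \<in> ring_iso (ext_field f) (ext_field h) \<and> (\<forall>c. \<phi> [:c:] = [:c:]))"

end

theory Submission
  imports Defs "HOL-Number_Theory.Residues"
begin

text \<open>For each of the infinitely many monic irreducible \<open>Q \<in> F\<^sub>q[t]\<close> with \<open>Q \<nmid> g\<close> take the
  pure cubic field \<open>K = F\<^sub>q(t)(x)\<close>, \<open>x\<^sup>3 = Q\<close>. As \<open>3 \<noteq> 0\<close>, Gauss's lemma and a valuation argument
  show \<open>O\<^sub>K = F\<^sub>q[t][x]\<close>, whose discriminant \<open>-27 Q\<^sup>2\<close> is prime to \<open>g\<close>. The ring \<open>O\<^sub>K / g O\<^sub>K\<close>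
  has \<open>N = q ^ (3 deg g)\<close> elements, and \<open>N \<equiv> 2 (mod 3)\<close> because \<open>q \<equiv> 2 (mod 3)\<close> and \<open>deg g\<close> is odd;
  so \<open>x ^ N = Q ^ ((N - 2) / 3) x\<^sup>2\<close> differs from \<open>x\<close> modulo \<open>g\<close>, and \<open>g\<close> is not Carmichael.
  An isomorphism between the fields for \<open>Q\<close> and \<open>Q'\<close> would give a cube root of \<open>Q\<close> in
  \<open>F\<^sub>q[t][x']\<close>; reducing modulo \<open>Q\<close>, where this ring has no nilpotents, shows that this is
  impossible.\<close>

hide_const (open) up_ring.coeff up_ring.monom module.smult

section \<open>Polynomials over a field\<close>

lemma irreducible_degree_pos: "irreducible (Q::'a::field poly) \<Longrightarrow> degree Q > 0"
  using is_unit_iff_degree[of Q] irreducible_not_unit[of Q] by (cases "Q = 0") auto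

lemma irreducible_factor_exists:
  fixes a :: "'a::field poly"
  assumes "degree a > 0"
  obtains P where "irreducible P" "P dvd a" "lead_coeff P = 1"
proof -
  define S where "S = {e. degree e > 0 \<and> e dvd a}"
  obtain e where eS: "e \<in> S" and e_min: "\<And>e'. e' \<in> S \<Longrightarrow> degree e \<le> degree e'"
    using ex_has_least_nat[of "\<lambda>e. e \<in> S" a degree] assms by (auto simp: S_def)
  have e0: "e \<noteq> 0" using eS by (auto simp: S_def)
  have "irreducible e"
  proof (rule irreducibleI)
    show "\<not> is_unit e" using eS e0 by (auto simp: S_def is_unit_iff_degree)
    fix x y assume xy: "e = x * y"
    with e0 have "x \<noteq> 0" "y \<noteq> 0" by auto
    show "is_unit x \<or> is_unit y"
    proof (rule ccontr)
      assume "\<not> (is_unit x \<or> is_unit y)"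
      with \<open>x \<noteq> 0\<close> \<open>y \<noteq> 0\<close> have "degree x > 0" "degree y > 0" by (auto simp: is_unit_iff_degree)
      moreover have "x dvd a" using eS xy by (auto simp: S_def intro: dvd_trans)
      ultimately have "degree e \<le> degree x" by (intro e_min) (simp add: S_def)
      with \<open>degree y > 0\<close> show False by (simp add: xy degree_mult_eq \<open>x \<noteq> 0\<close> \<open>y \<noteq> 0\<close>)
    qed
  qed (fact e0)
  moreover have "is_unit [:inverse (lead_coeff e):]" using e0 by (simp add: is_unit_iff_degree)
  ultimately have "irreducible ([:inverse (lead_coeff e):] * e)"
    using irreducible_mult_unit_left by blast
  then have "irreducible (smult (inverse (lead_coeff e)) e)" by simp
  then show ?thesis
    using that[of "smult (inverse (lead_coeff e)) e"] eS e0 by (auto simp: S_def smult_dvd_iff)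
qed

lemma monic_irreducible_dvd_imp_eq:
  fixes P Q :: "'a::field poly"
  assumes "irreducible P" "irreducible Q" "lead_coeff P = 1" "lead_coeff Q = 1" "P dvd Q"
  shows "P = Q"
proof -
  obtain w where w: "Q = P * w" using assms(5) by (elim dvdE)
  have "is_unit w" using irreducibleD[OF assms(2) w] irreducible_not_unit[OF assms(1)] by blast
  then obtain c where c: "w = [:c:]" by (auto simp: is_unit_poly_iff)
  have "lead_coeff Q = lead_coeff P * lead_coeff w" by (simp add: w lead_coeff_mult)
  with assms(3,4) have "c = 1" by (simp add: c)
  with w c show ?thesis by simp
qed

lemma infinite_monic_irreducible_not_dvd:
  fixes g :: "'a::field poly"
  assumes "g \<noteq> 0"
  shows "infinite {Q. irreducible Q \<and> lead_coeff Q = 1 \<and> \<not> Q dvd g}"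
proof
  define S where "S = {Q. irreducible Q \<and> lead_coeff Q = 1 \<and> \<not> Q dvd g}"
  assume "finite S"
  define M where "M = [:0, 1:] * g * \<Prod>S + 1"
  have "\<Prod>S \<noteq> 0" using \<open>finite S\<close> by (auto simp: S_def)
  then have "degree ([:0, 1:] * g * \<Prod>S) > 0" using assms by (simp add: degree_mult_eq)
  then have "degree M > 0" by (simp add: M_def degree_add_eq_left)
  then obtain P where P: "irreducible P" "P dvd M" "lead_coeff P = 1" by (rule irreducible_factor_exists)
  have "P dvd g * \<Prod>S"
  proof (cases "P dvd g")
    case False
    then have "P \<in> S" using P by (simp add: S_def)
    then have "P dvd \<Prod>S" using \<open>finite S\<close> dvd_prodI[of S P id] by simp
    then show ?thesis by simp
  qed simp
  then have "P dvd [:0, 1:] * g * \<Prod>S" unfolding mult.assoc by (rule dvd_mult)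
  then have "P dvd 1" using P(2) by (simp add: M_def dvd_add_right_iff)
  with P(1) show False by (simp add: irreducible_not_unit)
qed

lemma irreducible_bezout:
  fixes P a :: "'b::euclidean_ring"
  assumes P: "irreducible P" and "\<not> P dvd a"
  obtains u v where "u * P + v * a = 1"
proof -
  define S where "S = {e. e \<noteq> 0 \<and> (\<exists>u v. e = u * P + v * a)}"
  have "P \<in> S" using P by (auto simp: S_def intro: exI[of _ 1] exI[of _ 0])
  then obtain e where eS: "e \<in> S" and e_min: "\<And>e'. e' \<in> S \<Longrightarrow> euclidean_size e \<le> euclidean_size e'"
    using ex_has_least_nat[of "\<lambda>e. e \<in> S" P euclidean_size] by blast
  from eS obtain u v where e: "e = u * P + v * a" and e0: "e \<noteq> 0" by (auto simp: S_def)
  have e_dvd: "e dvd x" if "x = u' * P + v' * a" for x u' v'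
  proof (rule ccontr)
    assume "\<not> e dvd x"
    then have "x mod e \<noteq> 0" by (simp add: mod_eq_0_iff_dvd)
    moreover have "x mod e = (u' - (x div e) * u) * P + (v' - (x div e) * v) * a"
      by (simp add: minus_div_mult_eq_mod[symmetric] that e algebra_simps)
    ultimately have "x mod e \<in> S" by (auto simp: S_def)
    with e_min mod_size_less[OF e0, of x] show False by fastforce
  qed
  have "e dvd P" by (rule e_dvd[of _ 1 0]) simp
  moreover have "e dvd a" by (rule e_dvd[of _ 0 1]) simp
  ultimately have "is_unit e"
    using irreducibleD'[OF P] assms(2) by (blast intro: dvd_trans)
  then obtain z where "1 = e * z" by (elim dvdE)
  then have "(z * u) * P + (z * v) * a = 1" by (simp add: e algebra_simps)
  then show ?thesis by (rule that)
qed

lemma irreducible_dvd_of_common_root_mod: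
  fixes m H f \<beta> :: "'b::field poly"
  assumes m: "irreducible m" and "degree f > 0"
    and "pcompose m \<beta> mod f = 0" and "pcompose H \<beta> mod f = 0"
  shows "m dvd H"
proof (rule ccontr)
  assume "\<not> m dvd H"
  then obtain u v where uv: "u * m + v * H = 1" using irreducible_bezout[OF m] by blast
  have "f dvd pcompose u \<beta> * pcompose m \<beta> + pcompose v \<beta> * pcompose H \<beta>"
    using assms(3,4) by (simp add: dvd_eq_mod_eq_0[symmetric])
  then have "f dvd 1"
    by (simp flip: pcompose_mult pcompose_add add: uv pcompose_1)
  with assms(2) show False using is_unit_iff_degree[of f] by (cases "f = 0") auto
qed

lemma irreducible_cubic_no_roots:
  fixes m :: "'b::field poly"
  assumes "degree m = 3" and no_root: "\<And>t. poly m t \<noteq> 0"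
  shows "irreducible m"
proof (rule irreducibleI)
  show m0: "m \<noteq> 0" using assms(1) by auto
  then show "\<not> is_unit m" using assms(1) by (simp add: is_unit_iff_degree)
  fix a b assume ab: "m = a * b"
  show "is_unit a \<or> is_unit b"
  proof (rule ccontr)
    assume "\<not> (is_unit a \<or> is_unit b)"
    moreover have "a \<noteq> 0" "b \<noteq> 0" using ab m0 by auto
    ultimately have "degree a \<noteq> 0" "degree b \<noteq> 0" "degree a + degree b = 3"
      using ab assms(1) by (auto simp: is_unit_iff_degree degree_mult_eq)
    then have "degree a = 1 \<or> degree b = 1" by linarith
    then obtain p where p: "p dvd m" "degree p = 1"
      using ab by (auto intro: dvd_triv_left dvd_triv_right)
    then have p_lin: "p = [:coeff p 0, coeff p 1:]"
      by (intro poly_eqI) (auto simp: coeff_pCons coeff_eq_0 split: nat.splits)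
    have "coeff p 1 \<noteq> 0" using p(2) by (metis leading_coeff_0_iff One_nat_def zero_neq_one degree_0)
    then have "poly p (- coeff p 0 / coeff p 1) = 0" by (subst p_lin) (simp add: field_simps)
    with p(1) have "poly m (- coeff p 0 / coeff p 1) = 0" by (auto elim: dvdE)
    with no_root show False by blast
  qed
qed

lemma card_poly_coeff_vanishing:
  "card {p :: 'a::{finite,zero} poly. \<forall>i\<ge>n. coeff p i = 0} = CARD('a) ^ n"
proof (induction n)
  case 0
  have "{p :: 'a poly. \<forall>i\<ge>0. coeff p i = 0} = {0}" by (auto intro: poly_eqI)
  then show ?case by simp
next
  case (Suc n)
  let ?S = "{q :: 'a poly. \<forall>i\<ge>n. coeff q i = 0}"
  have "{p :: 'a poly. \<forall>i\<ge>Suc n. coeff p i = 0} = (\<lambda>(a, q). pCons a q) ` (UNIV \<times> ?S)"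
  proof (intro equalityI subsetI)
    fix p :: "'a poly" assume p: "p \<in> {p. \<forall>i\<ge>Suc n. coeff p i = 0}"
    obtain a q where "p = pCons a q" by (cases p)
    with p show "p \<in> (\<lambda>(a, q). pCons a q) ` (UNIV \<times> ?S)" by force
  qed (auto simp: coeff_pCons split: nat.splits)
  moreover have "inj_on (\<lambda>(a, q). pCons a q) (UNIV \<times> ?S)" by (auto simp: inj_on_def)
  moreover have "finite ?S" using Suc.IH by (intro card_ge_0_finite) simp
  ultimately show ?case by (simp add: card_image card_cartesian_product Suc.IH)
qed

lemma card_degree_less:
  assumes "n > 0"
  shows "card {p :: 'a::{finite,zero} poly. degree p < n} = CARD('a) ^ n"
proof -
  have "degree p < n" if "\<forall>i\<ge>n. coeff p i = 0" for p :: "'a poly"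
  proof -
    have "degree p \<le> n - 1" using that assms by (intro degree_le) auto
    with assms show ?thesis by simp
  qed
  then have "{p :: 'a poly. degree p < n} = {p. \<forall>i\<ge>n. coeff p i = 0}"
    by (auto intro: coeff_eq_0)
  then show ?thesis by (simp add: card_poly_coeff_vanishing)
qed

section \<open>Arithmetic in pure cubic algebras\<close>

text \<open>An element \<open>a + b x + c x\<^sup>2\<close> of \<open>R[x]/(x\<^sup>3 - C)\<close> is represented by the triple \<open>(a, b, c)\<close>.\<close>

definition pure_cubic :: "'b::comm_ring_1 \<Rightarrow> 'b poly" where
  "pure_cubic C = [:-C, 0, 0, 1:]"

definition cube_poly :: "'b::zero \<times> 'b \<times> 'b \<Rightarrow> 'b poly" where
  "cube_poly u = (case u of (a, b, c) \<Rightarrow> [:a, b, c:])"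

definition cube_mult :: "'b::comm_ring_1 \<Rightarrow> 'b \<times> 'b \<times> 'b \<Rightarrow> 'b \<times> 'b \<times> 'b \<Rightarrow> 'b \<times> 'b \<times> 'b" where
  "cube_mult C u v = (case u of (a0, a1, a2) \<Rightarrow> case v of (b0, b1, b2) \<Rightarrow>
     (a0*b0 + C*(a1*b2 + a2*b1), a0*b1 + a1*b0 + C*(a2*b2), a0*b2 + a1*b1 + a2*b0))"

definition cube_norm :: "'b::comm_ring_1 \<Rightarrow> 'b \<times> 'b \<times> 'b \<Rightarrow> 'b" where
  "cube_norm C u = (case u of (a, b, c) \<Rightarrow> a^3 + C*b^3 + C^2*c^3 - 3*C*a*b*c)"

definition cube_adj :: "'b::comm_ring_1 \<Rightarrow> 'b \<times> 'b \<times> 'b \<Rightarrow> 'b \<times> 'b \<times> 'b" where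
  "cube_adj C u = (case u of (a, b, c) \<Rightarrow> (a^2 - C*b*c, C*c^2 - a*b, b^2 - a*c))"

definition cube_charpoly :: "'b::comm_ring_1 \<Rightarrow> 'b \<times> 'b \<times> 'b \<Rightarrow> 'b poly" where
  "cube_charpoly C u = (case u of (a, b, c) \<Rightarrow> [:- cube_norm C u, 3*a^2 - 3*C*b*c, -3*a, 1:])"

lemma degree_pure_cubic [simp]: "degree (pure_cubic (C::'b::comm_ring_1)) = 3"
  by (simp add: pure_cubic_def)

lemma degree_cube_poly: "degree (cube_poly u) < 3"
proof -
  have "degree (cube_poly u) \<le> 2"
    by (cases u) (auto simp: cube_poly_def intro!: degree_le simp: coeff_pCons split: nat.splits)
  then show ?thesis by simp
qed

lemma cube_poly_eq_iff [simp]: "cube_poly u = cube_poly v \<longleftrightarrow> u = v"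
  by (cases u; cases v) (simp add: cube_poly_def)

lemma cube_poly_eq_0_iff [simp]: "cube_poly u = 0 \<longleftrightarrow> u = (0, 0, 0)"
  using cube_poly_eq_iff[of u "(0, 0, 0)"] by (simp add: cube_poly_def)

lemma cube_poly_coeffs:
  assumes "degree p < 3"
  shows "p = cube_poly (coeff p 0, coeff p 1, coeff p 2)"
proof (rule poly_eqI)
  fix n
  show "coeff p n = coeff (cube_poly (coeff p 0, coeff p 1, coeff p 2)) n"
  proof (cases "n < 3")
    case True
    then have "n = 0 \<or> n = 1 \<or> n = 2" by auto
    then show ?thesis by (auto simp: cube_poly_def numeral_2_eq_2)
  next
    case False
    with assms degree_cube_poly show ?thesis by (metis coeff_eq_0 le_less_trans not_less)
  qed
qed

lemma cube_poly_mult_mod: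
  fixes C :: "'b::field"
  shows "(cube_poly u * cube_poly v) mod pure_cubic C = cube_poly (cube_mult C u v)"
proof -
  obtain a0 a1 a2 b0 b1 b2 where u: "u = (a0, a1, a2)" and v: "v = (b0, b1, b2)"
    by (cases u; cases v) auto
  have "cube_poly u * cube_poly v = [:a1*b2 + a2*b1, a2*b2:] * pure_cubic C + cube_poly (cube_mult C u v)"
    by (simp add: u v cube_poly_def cube_mult_def pure_cubic_def algebra_simps)
  then have "(cube_poly u * cube_poly v) mod pure_cubic C = cube_poly (cube_mult C u v) mod pure_cubic C"
    by (simp only: mod_mult_self3)
  then show ?thesis
    by (simp add: mod_poly_less degree_cube_poly)
qed

lemma cube_mult_comm: "cube_mult C u v = cube_mult C v u"
  by (cases u; cases v) (simp add: cube_mult_def algebra_simps)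

lemma cube_mult_assoc: "cube_mult C (cube_mult C u v) w = cube_mult C u (cube_mult C v w)"
  by (cases u; cases v; cases w) (simp add: cube_mult_def algebra_simps)

lemma cube_mult_square: "cube_mult C (a, b, c) (a, b, c) = (a^2 + 2*C*b*c, 2*a*b + C*c^2, b^2 + 2*a*c)"
  by (simp add: cube_mult_def algebra_simps power2_eq_square)

lemma cube_mult_scale:
  "cube_mult C (k*a, k*b, k*c) (l*a', l*b', l*c')
     = (case cube_mult C (a, b, c) (a', b', c') of (x, y, z) \<Rightarrow> (k*l*x, k*l*y, k*l*z))"
  by (simp add: cube_mult_def algebra_simps)

lemma cube_mult_adj: "cube_mult C u (cube_adj C u) = (cube_norm C u, 0, 0)"
  by (cases u) (simp add: cube_mult_def cube_adj_def cube_norm_def algebra_simps power2_eq_square power3_eq_cube)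

lemma lead_coeff_cube_charpoly [simp]: "lead_coeff (cube_charpoly C u) = 1"
  and degree_cube_charpoly [simp]: "degree (cube_charpoly C u) = 3"
  by (cases u; simp add: cube_charpoly_def)+

lemma poly_cube_charpoly: "poly (cube_charpoly C (a, b, c)) t = cube_norm C (t - a, - b, - c)"
  by (simp add: cube_charpoly_def cube_norm_def algebra_simps power2_eq_square power3_eq_cube)

text \<open>Cayley--Hamilton for multiplication by \<open>a + b x + c x\<^sup>2\<close>.\<close>

lemma cube_charpoly_root:
  fixes C :: "'b::field"
  shows "pcompose (cube_charpoly C u) (cube_poly u) mod pure_cubic C = 0"
proof -
  obtain a b c where u: "u = (a, b, c)" by (cases u)
  define y where "y = cube_poly u"
  define u2 where "u2 = cube_mult C u u"
  define u3 where "u3 = cube_mult C u2 u"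
  define s where "s = 3*a^2 - 3*C*b*c"
  have y2: "(y * y) mod pure_cubic C = cube_poly u2"
    by (simp add: y_def u2_def cube_poly_mult_mod)
  have "(y * y * y) mod pure_cubic C = (cube_poly u2 * cube_poly u) mod pure_cubic C"
    by (simp only: mod_mult_left_eq[of "y * y", symmetric] y2) (simp add: y_def)
  then have y3: "(y * y * y) mod pure_cubic C = cube_poly u3"
    by (simp add: u3_def cube_poly_mult_mod)
  have d2: "pure_cubic C dvd y * y - cube_poly u2"
    unfolding y2[symmetric] by (simp add: minus_mod_eq_mult_div)
  have d3: "pure_cubic C dvd y * y * y - cube_poly u3"
    unfolding y3[symmetric] by (simp add: minus_mod_eq_mult_div)
  have zero: "cube_poly u3 + [:-3*a:] * cube_poly u2 + [:s:] * y + [:- cube_norm C u:] = 0"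
    unfolding u3_def u2_def y_def s_def u
    by (simp add: cube_poly_def cube_mult_def cube_norm_def)
      (simp add: algebra_simps power2_eq_square power3_eq_cube)
  have "pcompose (cube_charpoly C u) y = y * y * y + [:-3*a:] * (y * y) + [:s:] * y + [:- cube_norm C u:]"
    by (simp add: u s_def cube_charpoly_def pcompose_pCons algebra_simps)
  also have "\<dots> = (y * y * y - cube_poly u3) + [:-3*a:] * (y * y - cube_poly u2)
      + (cube_poly u3 + [:-3*a:] * cube_poly u2 + [:s:] * y + [:- cube_norm C u:])"
    by (simp add: algebra_simps smult_diff_right)
  finally have "pcompose (cube_charpoly C u) y = (y * y * y - cube_poly u3) + [:-3*a:] * (y * y - cube_poly u2)"
    by (simp only: zero add_0_right)
  moreover have "pure_cubic C dvd (y * y * y - cube_poly u3) + [:-3*a:] * (y * y - cube_poly u2)"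
    using d2 d3 by (intro dvd_add dvd_mult)
  ultimately show ?thesis by (simp add: y_def dvd_eq_mod_eq_0)
qed

definition cube_x_pow :: "'b::comm_ring_1 \<Rightarrow> nat \<Rightarrow> 'b \<times> 'b \<times> 'b" where
  "cube_x_pow C n = (if n mod 3 = 0 then (C ^ (n div 3), 0, 0)
     else if n mod 3 = 1 then (0, C ^ (n div 3), 0) else (0, 0, C ^ (n div 3)))"

lemma cube_x_pow_Suc: "cube_mult C (cube_x_pow C n) (0, 1, 0) = cube_x_pow C (Suc n)"
proof -
  have "n mod 3 = 0 \<or> n mod 3 = 1 \<or> n mod 3 = 2" by presburger
  then show ?thesis
  proof (elim disjE)
    assume "n mod 3 = 2"
    moreover have "Suc n mod 3 = 0" "Suc n div 3 = Suc (n div 3)" using calculation by presburger+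
    ultimately show ?thesis by (simp add: cube_x_pow_def cube_mult_def mult.commute)
  qed (simp_all add: cube_x_pow_def cube_mult_def mod_Suc div_Suc)
qed

section \<open>The fraction field of \<open>F\<^sub>q[t]\<close>\<close>

lemma to_fract_power [simp]: "to_fract (x ^ n) = to_fract x ^ n"
  by (induction n) simp_all

lemma to_fract_of_nat [simp]: "to_fract (of_nat n) = of_nat n"
  by (induction n) simp_all

lemma to_fract_numeral [simp]: "to_fract (numeral n) = numeral n"
  by (metis of_nat_numeral to_fract_of_nat)

lemma range_to_fract_closed:
  "x \<in> range to_fract \<Longrightarrow> y \<in> range to_fract \<Longrightarrow> x + y \<in> range to_fract"
  "x \<in> range to_fract \<Longrightarrow> y \<in> range to_fract \<Longrightarrow> x - y \<in> range to_fract"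
  "x \<in> range to_fract \<Longrightarrow> y \<in> range to_fract \<Longrightarrow> x * y \<in> range to_fract"
  "x \<in> range to_fract \<Longrightarrow> - x \<in> range to_fract"
  "x \<in> range to_fract \<Longrightarrow> x ^ n \<in> range to_fract"
  "numeral k \<in> range to_fract"
  by (auto simp flip: to_fract_add to_fract_diff to_fract_mult to_fract_uminus to_fract_power)
    (metis rangeI to_fract_numeral)

lemma to_fract_div_in_range_iff:
  assumes "(b::'b::idom) \<noteq> 0"
  shows "to_fract a / to_fract b \<in> range to_fract \<longleftrightarrow> b dvd a"
proof
  assume "to_fract a / to_fract b \<in> range to_fract"
  then obtain k where "to_fract a / to_fract b = to_fract k" by auto
  then have "to_fract a = to_fract b * to_fract k" using assms by (simp add: field_simps)
  then have "a = b * k" by (simp flip: to_fract_mult)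
  then show "b dvd a" by simp
qed (use assms in auto)

lemma three_times_in_range_to_fract:
  fixes x :: "'a::field poly fract"
  assumes three: "(3::'a) \<noteq> 0" and "3 * x \<in> range to_fract"
  shows "x \<in> range to_fract"
proof -
  obtain y where y: "3 * x = to_fract y" using assms(2) by auto
  have "[:inverse 3:] * 3 = (1::'a poly)" using three by (simp add: numeral_poly)
  from arg_cong[OF this, of to_fract] have inv: "to_fract [:inverse (3::'a):] * 3 = 1"
    by (simp only: to_fract_mult to_fract_numeral to_fract_1)
  have "x = to_fract [:inverse 3:] * (3 * x)" by (simp only: mult.assoc[symmetric] inv mult_1_left)
  then have "x = to_fract ([:inverse 3:] * y)" by (simp only: y to_fract_mult)
  then show ?thesis by (rule image_eqI) simp
qed

lemma prime_elem_dvd_coeffs_mult: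
  fixes P :: "'b::comm_ring_1" and u v :: "'b poly"
  assumes P: "prime_elem P" and dvd: "\<And>i. P dvd coeff (u * v) i"
  shows "(\<forall>i. P dvd coeff u i) \<or> (\<forall>i. P dvd coeff v i)"
proof (rule ccontr)
  assume "\<not> ?thesis"
  then obtain i1 j1 where i1: "\<not> P dvd coeff u i1" and j1: "\<not> P dvd coeff v j1" by auto
  define i0 where "i0 = (LEAST i. \<not> P dvd coeff u i)"
  define j0 where "j0 = (LEAST j. \<not> P dvd coeff v j)"
  have i0: "\<not> P dvd coeff u i0" unfolding i0_def by (rule LeastI[of _ i1]) (rule i1)
  have j0: "\<not> P dvd coeff v j0" unfolding j0_def by (rule LeastI[of _ j1]) (rule j1)
  have below_i0: "P dvd coeff u k" if "k < i0" for k
    using not_less_Least[OF that[unfolded i0_def]] by simp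
  have below_j0: "P dvd coeff v k" if "k < j0" for k
    using not_less_Least[OF that[unfolded j0_def]] by simp
  text \<open>In \<open>coeff (u * v) (i0 + j0)\<close> every product except \<open>coeff u i0 * coeff v j0\<close> is divisible by \<open>P\<close>.\<close>
  define n where "n = i0 + j0"
  have "coeff (u * v) n = coeff u i0 * coeff v j0 + (\<Sum>k\<in>{..n} - {i0}. coeff u k * coeff v (n - k))"
    unfolding coeff_mult by (subst sum.remove[of _ i0]) (auto simp: n_def)
  moreover have "P dvd (\<Sum>k\<in>{..n} - {i0}. coeff u k * coeff v (n - k))"
  proof (rule dvd_sum)
    fix k assume k: "k \<in> {..n} - {i0}"
    show "P dvd coeff u k * coeff v (n - k)"
    proof (cases "k < i0")
      case False
      with k have "n - k < j0" by (auto simp: n_def)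
      then show ?thesis by (simp add: below_j0)
    qed (simp add: below_i0)
  qed
  ultimately have "P dvd coeff u i0 * coeff v j0" using dvd[of n] by (simp add: dvd_add_left_iff)
  with P i0 j0 show False by (simp add: prime_elem_dvd_mult_iff)
qed

lemma clear_denominators:
  fixes p :: "'b::idom fract poly"
  obtains d p0 where "d \<noteq> 0" "smult (to_fract d) p = fract_poly p0"
proof -
  have "\<exists>d p0. d \<noteq> 0 \<and> smult (to_fract d) p = fract_poly p0"
  proof (induction p)
    case (pCons c q)
    then obtain d q0 where d: "d \<noteq> 0" and q: "smult (to_fract d) q = fract_poly q0" by auto
    obtain a b where b: "b \<noteq> 0" and c: "c = to_fract a / to_fract b"
      by (cases c) (auto simp: Fract_conv_to_fract)
    have "smult (to_fract (b * d)) (pCons c q) = fract_poly (pCons (a * d) (smult b q0))"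
      using b by (simp add: c map_poly_pCons mult_ac flip: q)
    with b d show ?case by (intro exI[of _ "b * d"] exI) auto
  qed (auto intro: exI[of _ 1])
  with that show ?thesis by blast
qed

text \<open>A version of Gauss's lemma for \<open>F\<^sub>q[t]\<close>.\<close>

lemma lead_coeff_dvd_coeff_of_factor:
  fixes m0 k0 h :: "'a::field poly poly"
  assumes "lead_coeff h = 1"
  shows "m0 * k0 = smult (lead_coeff m0 * lead_coeff k0) h \<Longrightarrow> lead_coeff m0 * lead_coeff k0 \<noteq> 0
    \<Longrightarrow> lead_coeff m0 dvd coeff m0 i"
proof (induction "degree (lead_coeff m0 * lead_coeff k0)" arbitrary: m0 k0 rule: less_induct)
  case less
  define D where "D = lead_coeff m0 * lead_coeff k0"
  show ?case
  proof (cases "degree D = 0")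
    case True
    with less.prems have "is_unit (lead_coeff m0)" by (auto simp: D_def is_unit_iff_degree degree_mult_eq)
    then show ?thesis by auto
  next
    case False
    then obtain P where P: "irreducible P" "P dvd D" by (auto elim: irreducible_factor_exists)
    have P0: "P \<noteq> 0" and "degree P > 0" using irreducible_degree_pos[OF P(1)] by auto
    have "P dvd coeff (m0 * k0) j" for j using less.prems(1) P(2) by (simp add: D_def)
    then have "(\<forall>j. P dvd coeff m0 j) \<or> (\<forall>j. P dvd coeff k0 j)"
      by (rule prime_elem_dvd_coeffs_mult[OF field_poly_irreducible_imp_prime[OF P(1)]])
    moreover have "w = smult P (map_poly (\<lambda>c. c div P) w)" if "\<forall>j. P dvd coeff w j" for w
      using that by (intro poly_eqI) (simp add: coeff_map_poly)
    ultimately obtain m' k' where split: "m0 = smult P m' \<and> k0 = k' \<or> m0 = m' \<and> k0 = smult P k'"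
      by blast
    then have "smult P (m' * k') = smult P (smult (lead_coeff m' * lead_coeff k') h)"
      using less.prems(1) by (auto simp: ac_simps)
    then have "m' * k' = smult (lead_coeff m' * lead_coeff k') h" by (rule smult_cancel[OF P0])
    moreover have "degree (lead_coeff m' * lead_coeff k') < degree (lead_coeff m0 * lead_coeff k0)"
      using split less.prems(2) \<open>degree P > 0\<close> P0 by (auto simp: degree_mult_eq)
    moreover have "lead_coeff m' * lead_coeff k' \<noteq> 0" using split less.prems(2) by auto
    ultimately have "lead_coeff m' dvd coeff m' i" using less.hyps by blast
    with split show ?thesis by (auto simp: mult_dvd_mono)
  qed
qed

lemma monic_factor_coeff_in_range_to_fract:
  fixes m k :: "'a::field poly fract poly" and h :: "'a poly poly"
  assumes m: "lead_coeff m = 1" and h: "lead_coeff h = 1" and e: "m * k = fract_poly h"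
  shows "coeff m i \<in> range to_fract"
proof -
  obtain d1 m0 where d1: "d1 \<noteq> 0" and m0: "smult (to_fract d1) m = fract_poly m0"
    by (rule clear_denominators)
  obtain d2 k0 where d2: "d2 \<noteq> 0" and k0: "smult (to_fract d2) k = fract_poly k0"
    by (rule clear_denominators)
  have "lead_coeff k = 1"
    using arg_cong[OF e, of lead_coeff] m h by (simp add: lead_coeff_mult degree_map_poly coeff_map_poly)
  then have lc: "lead_coeff m0 = d1" "lead_coeff k0 = d2"
    using arg_cong[OF m0, of lead_coeff] arg_cong[OF k0, of lead_coeff] m d1 d2
    by (simp_all add: degree_map_poly coeff_map_poly)
  have "fract_poly (m0 * k0) = fract_poly (smult (d1 * d2) h)"
    by (simp add: m0[symmetric] k0[symmetric] e[symmetric] mult_ac)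
  then have "m0 * k0 = smult (lead_coeff m0 * lead_coeff k0) h"
    by (simp only: fract_poly_eq_iff lc)
  then have "lead_coeff m0 dvd coeff m0 i"
    by (rule lead_coeff_dvd_coeff_of_factor[OF h]) (simp add: lc d1 d2)
  then have "d1 dvd coeff m0 i" by (simp add: lc)
  then obtain c where "coeff m0 i = d1 * c" by (elim dvdE)
  moreover have "to_fract (coeff m0 i) = to_fract d1 * coeff m i"
    using arg_cong[OF m0, of "\<lambda>p. coeff p i"] by (simp add: coeff_map_poly)
  ultimately have "coeff m i = to_fract c" using d1 by simp
  then show ?thesis by simp
qed

lemma prime_dvd_cube_coords:
  fixes Q P a b :: "'b::{idom,algebraic_semidom}"
  assumes Q: "prime_elem Q" and P: "prime_elem P"
    and h1: "P dvd Q * a * b" and h2: "P ^ 3 dvd Q * a ^ 3 + Q ^ 2 * b ^ 3"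
  shows "P dvd a \<and> P dvd b"
proof (cases "P dvd Q")
  case True
  then obtain w where w: "Q = P * w" by (elim dvdE)
  have "is_unit w"
    using irreducibleD[OF prime_elem_imp_irreducible[OF Q] w] P by (auto simp: prime_elem_not_unit)
  have "P * P ^ 2 dvd P * (w * a ^ 3 + P * (w ^ 2 * b ^ 3))"
    using h2 by (simp add: w power2_eq_square power3_eq_cube algebra_simps)
  then have h2': "P ^ 2 dvd w * a ^ 3 + P * (w ^ 2 * b ^ 3)" using P by simp
  then have "P dvd w * a ^ 3 + P * (w ^ 2 * b ^ 3)" by (rule dvd_trans[rotated]) simp
  then have "P dvd w * a ^ 3" by (simp add: dvd_add_left_iff)
  with \<open>is_unit w\<close> P have "P dvd a" by (simp add: dvd_mult_unit_iff' prime_elem_dvd_power_iff)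
  then have "P ^ 2 dvd w * a ^ 3" by (simp add: power2_eq_square power3_eq_cube mult_dvd_mono)
  with h2' have "P * P dvd P * (w ^ 2 * b ^ 3)" by (simp add: dvd_add_right_iff power2_eq_square)
  with \<open>is_unit w\<close> P have "P dvd b"
    by (simp add: dvd_mult_unit_iff' is_unit_power_iff prime_elem_dvd_power_iff)
  with \<open>P dvd a\<close> show ?thesis by simp
next
  case False
  have h2': "P dvd Q * a ^ 3 + Q ^ 2 * b ^ 3" using h2 by (rule dvd_trans[rotated]) simp
  from h1 P False have "P dvd a \<or> P dvd b" by (simp add: prime_elem_dvd_mult_iff)
  then show ?thesis
  proof
    assume "P dvd a"
    then have "P dvd Q * a ^ 3" using P by (simp add: prime_elem_dvd_mult_iff prime_elem_dvd_power_iff)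
    with h2' have "P dvd Q ^ 2 * b ^ 3" by (simp add: dvd_add_right_iff)
    with P False \<open>P dvd a\<close> show ?thesis by (simp add: prime_elem_dvd_mult_iff prime_elem_dvd_power_iff)
  next
    assume "P dvd b"
    then have "P dvd Q ^ 2 * b ^ 3" using P by (simp add: prime_elem_dvd_mult_iff prime_elem_dvd_power_iff)
    with h2' have "P dvd Q * a ^ 3" by (simp add: dvd_add_left_iff)
    with P False \<open>P dvd b\<close> show ?thesis by (simp add: prime_elem_dvd_mult_iff prime_elem_dvd_power_iff)
  qed
qed

lemma dvd_cube_coords:
  fixes Q :: "'a::field poly"
  assumes Q: "irreducible Q"
  shows "d \<noteq> 0 \<Longrightarrow> d ^ 2 dvd Q * a * b \<Longrightarrow> d ^ 3 dvd Q * a ^ 3 + Q ^ 2 * b ^ 3 \<Longrightarrow> d dvd a \<and> d dvd b"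
proof (induction "degree d" arbitrary: d a b rule: less_induct)
  case less
  show ?case
  proof (cases "degree d = 0")
    case True
    with less.prems have "is_unit d" by (simp add: is_unit_iff_degree)
    then show ?thesis by auto
  next
    case False
    then obtain P where P: "irreducible P" "P dvd d" by (auto elim: irreducible_factor_exists)
    have "P dvd d ^ 2" using P(2) by (simp add: power2_eq_square)
    then have "P dvd Q * a * b" using less.prems(2) by (rule dvd_trans)
    moreover have "P ^ 3 dvd Q * a ^ 3 + Q ^ 2 * b ^ 3"
      using dvd_power_same[OF P(2)] less.prems(3) by (rule dvd_trans)
    ultimately have "P dvd a \<and> P dvd b"
      by (rule prime_dvd_cube_coords[OF field_poly_irreducible_imp_prime[OF Q] field_poly_irreducible_imp_prime[OF P(1)]])
    then obtain a' b' where a: "a = P * a'" and b: "b = P * b'" by (blast elim!: dvdE)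
    obtain d' where d: "d = P * d'" using P(2) by (elim dvdE)
    have "P \<noteq> 0" using P(1) by auto
    have "d' \<noteq> 0" using less.prems(1) d by auto
    have e2: "d ^ 2 = P ^ 2 * d' ^ 2" "Q * a * b = P ^ 2 * (Q * a' * b')"
      by (simp_all add: a b d power2_eq_square ac_simps)
    have "P ^ 2 * d' ^ 2 dvd P ^ 2 * (Q * a' * b')" using less.prems(2) unfolding e2 .
    then have h1: "d' ^ 2 dvd Q * a' * b'" using \<open>P \<noteq> 0\<close> by (simp add: dvd_times_left_cancel_iff)
    have e3: "d ^ 3 = P ^ 3 * d' ^ 3" "Q * a ^ 3 + Q ^ 2 * b ^ 3 = P ^ 3 * (Q * a' ^ 3 + Q ^ 2 * b' ^ 3)"
      by (simp_all add: a b d power_mult_distrib algebra_simps)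
    have "P ^ 3 * d' ^ 3 dvd P ^ 3 * (Q * a' ^ 3 + Q ^ 2 * b' ^ 3)" using less.prems(3) unfolding e3 .
    then have h2: "d' ^ 3 dvd Q * a' ^ 3 + Q ^ 2 * b' ^ 3" using \<open>P \<noteq> 0\<close> by (simp add: dvd_times_left_cancel_iff)
    have "degree d' < degree d"
      using \<open>P \<noteq> 0\<close> \<open>d' \<noteq> 0\<close> irreducible_degree_pos[OF P(1)] by (simp add: d degree_mult_eq)
    from less.hyps[OF this \<open>d' \<noteq> 0\<close> h1 h2] show ?thesis by (simp add: a b d)
  qed
qed

lemma cube_coords_in_range_to_fract:
  fixes Q :: "'a::field poly" and b c :: "'a poly fract"
  assumes Q: "irreducible Q"
    and "to_fract Q * b * c \<in> range to_fract"
    and "to_fract Q * b ^ 3 + to_fract Q ^ 2 * c ^ 3 \<in> range to_fract"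
  shows "b \<in> range to_fract \<and> c \<in> range to_fract"
proof -
  obtain x d1 y d2 where d1: "d1 \<noteq> 0" "b = to_fract x / to_fract d1"
    and d2: "d2 \<noteq> 0" "c = to_fract y / to_fract d2"
    by (cases b; cases c) (auto simp: Fract_conv_to_fract)
  define d where "d = d1 * d2"
  have d0: "d \<noteq> 0" using d1 d2 by (simp add: d_def)
  have b: "b = to_fract (x * d2) / to_fract d" and c: "c = to_fract (y * d1) / to_fract d"
    using d1 d2 by (simp_all add: d_def field_simps)
  have "to_fract Q * b * c = to_fract (Q * (x * d2) * (y * d1)) / to_fract (d ^ 2)"
    by (simp add: b c power2_eq_square)
  with assms(2) have "to_fract (Q * (x * d2) * (y * d1)) / to_fract (d ^ 2) \<in> range to_fract"
    by simp
  then have "d ^ 2 dvd Q * (x * d2) * (y * d1)"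
    using to_fract_div_in_range_iff[of "d ^ 2"] d0 by (simp only: power_not_zero simp_thms)
  moreover have "to_fract Q * b ^ 3 + to_fract Q ^ 2 * c ^ 3
      = to_fract (Q * (x * d2) ^ 3 + Q ^ 2 * (y * d1) ^ 3) / to_fract (d ^ 3)"
    using d0 by (simp add: b c power_divide add_divide_distrib)
  with assms(3) have "to_fract (Q * (x * d2) ^ 3 + Q ^ 2 * (y * d1) ^ 3) / to_fract (d ^ 3) \<in> range to_fract"
    by simp
  then have "d ^ 3 dvd Q * (x * d2) ^ 3 + Q ^ 2 * (y * d1) ^ 3"
    using to_fract_div_in_range_iff[of "d ^ 3"] d0 by (simp only: power_not_zero simp_thms)
  ultimately have "d dvd x * d2 \<and> d dvd y * d1" using dvd_cube_coords[OF Q d0] by blast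
  then show ?thesis unfolding b c by (simp only: to_fract_div_in_range_iff[OF d0])
qed

lemma irreducible_not_cube_times_cube:
  fixes Q :: "'a::field poly"
  assumes "irreducible Q" "b \<noteq> 0"
  shows "a ^ 3 \<noteq> Q * b ^ 3"
  using assms(2)
proof (induction "degree b" arbitrary: a b rule: less_induct)
  case less
  have Q: "prime_elem Q" using assms(1) by (rule field_poly_irreducible_imp_prime)
  show ?case
  proof
    assume e: "a ^ 3 = Q * b ^ 3"
    then have "Q dvd a" using Q prime_elem_dvd_power[of Q a 3] by simp
    then obtain a' where a: "a = Q * a'" by (elim dvdE)
    from e have e': "Q ^ 2 * a' ^ 3 = b ^ 3"
      using Q by (simp add: a power3_eq_cube power2_eq_square ac_simps)
    then have "Q dvd b" using Q prime_elem_dvd_power[of Q b 3] by (metis dvd_mult2 dvd_triv_left power2_eq_square)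
    then obtain b' where b: "b = Q * b'" by (elim dvdE)
    have "b' \<noteq> 0" "Q \<noteq> 0" using less.prems Q by (auto simp: b)
    with e' have "a' ^ 3 = Q * b' ^ 3" by (simp add: b power3_eq_cube power2_eq_square ac_simps)
    moreover have "degree b' < degree b"
      using \<open>b' \<noteq> 0\<close> \<open>Q \<noteq> 0\<close> irreducible_degree_pos[OF assms(1)] by (simp add: b degree_mult_eq)
    ultimately show False using less.hyps \<open>b' \<noteq> 0\<close> by blast
  qed
qed

lemma irreducible_not_cube:
  fixes Q :: "'a::field poly"
  assumes "irreducible Q"
  shows "r ^ 3 \<noteq> to_fract Q"
proof
  assume h: "r ^ 3 = to_fract Q"
  obtain a b where b: "b \<noteq> 0" and r: "r = to_fract a / to_fract b"
    by (cases r) (auto simp: Fract_conv_to_fract)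
  have "to_fract (a ^ 3) = to_fract (Q * b ^ 3)"
    using h b by (simp add: r power_divide field_simps)
  then have "a ^ 3 = Q * b ^ 3" by (simp only: to_fract_eq_iff)
  with irreducible_not_cube_times_cube[OF assms b] show False by blast
qed

section \<open>Pure cubic fields and their rings of integers\<close>

context
  fixes Q :: "'a::field poly"
  assumes Q: "irreducible Q"
begin

lemma irreducible_pure_cubic: "irreducible (pure_cubic (to_fract Q))"
  by (rule irreducible_cubic_no_roots)
    (use irreducible_not_cube[OF Q] in \<open>simp_all add: pure_cubic_def power3_eq_cube mult.assoc\<close>)

lemma cube_adj_eq_0:
  assumes "cube_adj (to_fract Q) (a, b, c) = (0, 0, 0)"
  shows "a = 0 \<and> b = 0 \<and> c = 0"
proof -
  let ?C = "to_fract Q"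
  have C0: "?C \<noteq> 0" using Q by auto
  have e1: "a^2 = ?C*b*c" and e2: "?C*c^2 = a*b" and e3: "b^2 = a*c"
    using assms by (auto simp: cube_adj_def)
  show ?thesis
  proof (cases "a = 0")
    case True
    with e2 e3 C0 show ?thesis by simp
  next
    case a0: False
    with e3 have c: "c = b^2 / a" by (simp add: field_simps)
    show ?thesis
    proof (cases "b = 0")
      case True
      with c e1 a0 show ?thesis by simp
    next
      case False
      with e2 a0 have "?C * b^3 = a^3"
        unfolding c by (simp add: field_simps power2_eq_square power3_eq_cube)
      then have "(a / b)^3 = ?C" using False by (simp add: power_divide field_simps)
      with irreducible_not_cube[OF Q] show ?thesis by blast
    qed
  qed
qed

lemma cube_norm_eq_0:
  assumes "cube_norm (to_fract Q) u = 0"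
  shows "u = (0, 0, 0)"
proof -
  let ?f = "pure_cubic (to_fract Q)" and ?v = "cube_adj (to_fract Q) u"
  have "(cube_poly u * cube_poly ?v) mod ?f = 0"
    by (simp add: cube_poly_mult_mod cube_mult_adj assms)
  then have "?f dvd cube_poly u * cube_poly ?v" by (simp add: dvd_eq_mod_eq_0)
  then have "?f dvd cube_poly u \<or> ?f dvd cube_poly ?v"
    using field_poly_irreducible_imp_prime[OF irreducible_pure_cubic] by (simp add: prime_elem_dvd_mult_iff)
  then have "cube_poly u = 0 \<or> cube_poly ?v = 0"
    using degree_cube_poly by (metis degree_pure_cubic dvd_imp_degree_le not_le)
  then show ?thesis
    using cube_adj_eq_0 by (cases u) auto
qed

lemma irreducible_cube_charpoly:
  assumes "b \<noteq> 0 \<or> c \<noteq> 0"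
  shows "irreducible (cube_charpoly (to_fract Q) (a, b, c))"
  by (rule irreducible_cubic_no_roots)
    (use cube_norm_eq_0[of "(_ - a, - b, - c)"] assms in \<open>auto simp: poly_cube_charpoly\<close>)

end

definition to_fract3 :: "'b::idom \<times> 'b \<times> 'b \<Rightarrow> 'b fract \<times> 'b fract \<times> 'b fract" where
  "to_fract3 u = (case u of (a, b, c) \<Rightarrow> (to_fract a, to_fract b, to_fract c))"

lemma to_fract3_eq_iff [simp]: "to_fract3 u = to_fract3 v \<longleftrightarrow> u = v"
  by (cases u; cases v) (simp add: to_fract3_def)

lemma cube_mult_to_fract3:
  "cube_mult (to_fract C) (to_fract3 u) (to_fract3 v) = to_fract3 (cube_mult C u v)"
  by (cases u; cases v) (simp add: cube_mult_def to_fract3_def)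

lemma fract_poly_cube_charpoly:
  "fract_poly (cube_charpoly C u) = cube_charpoly (to_fract C) (to_fract3 u)"
  by (cases u) (simp add: cube_charpoly_def cube_norm_def to_fract3_def map_poly_pCons)

lemma integral_closure_iff:
  "\<beta> \<in> integral_closure f \<longleftrightarrow> degree \<beta> < degree f \<and>
     (\<exists>h. lead_coeff h = 1 \<and> pcompose (fract_poly h) \<beta> mod f = 0)"
proof -
  have "map_poly embA h = map_poly (\<lambda>x. [:x:]) (fract_poly h)" for h :: "'a poly poly"
    by (rule poly_eqI) (simp add: coeff_map_poly embA_def)
  then show ?thesis by (simp add: integral_closure_def pcompose_altdef)
qed

lemma cube_root_integral:
  fixes f y :: "'a::{finite,field} ffrac poly" and c :: "'a poly"
  assumes "degree y < degree f" and "(y * y mod f * y) mod f = [:to_fract c:]"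
  shows "y \<in> integral_closure f"
  unfolding integral_closure_iff
proof (intro conjI exI[of _ "[:-c, 0, 0, 1:]"])
  have "(y * y * y) mod f = [:to_fract c:]" using assms(2) by (simp only: mod_mult_left_eq)
  moreover have "pcompose (fract_poly [:-c, 0, 0, 1:]) y = y * y * y - [:to_fract c:]"
    by (simp add: map_poly_pCons pcompose_pCons algebra_simps)
  ultimately show "pcompose (fract_poly [:-c, 0, 0, 1:]) y mod f = 0"
    by (simp only:) (subst mod_diff_left_eq[symmetric], simp)
qed (simp_all add: assms(1))

lemma integral_irreducible_coeff_in_range_to_fract:
  assumes "\<beta> \<in> integral_closure f" "degree f > 0"
    and m: "irreducible m" "lead_coeff m = 1" "pcompose m \<beta> mod f = 0"
  shows "coeff m i \<in> range to_fract"
proof -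
  obtain h where h: "lead_coeff h = 1" "pcompose (fract_poly h) \<beta> mod f = 0"
    using assms(1) by (auto simp: integral_closure_iff)
  have "m dvd fract_poly h"
    using irreducible_dvd_of_common_root_mod[OF m(1) assms(2) m(3) h(2)] .
  then obtain k where "fract_poly h = m * k" by (elim dvdE)
  from monic_factor_coeff_in_range_to_fract[OF m(2) h(1) this[symmetric]] show ?thesis .
qed

context
  fixes Q :: "'a::{finite,field} poly"
  assumes Q: "irreducible Q" and three: "(3::'a) \<noteq> 0"
begin

lemma cube_coords_in_range_to_fract_of_charpoly:
  assumes coeffs: "\<And>i. coeff (cube_charpoly (to_fract Q) (a, b, c)) i \<in> range to_fract"
  shows "a \<in> range to_fract \<and> b \<in> range to_fract \<and> c \<in> range to_fract"
proof -
  let ?C = "to_fract Q"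
  note closed = range_to_fract_closed
  have three_A: "(3 :: 'a poly fract) \<in> range to_fract" by (rule closed(6))
  have "- (3 * a) \<in> range to_fract" using coeffs[of 2] by (simp add: cube_charpoly_def numeral_2_eq_2)
  from closed(4)[OF this] have a: "a \<in> range to_fract"
    using three_times_in_range_to_fract[OF three] by simp
  have a2: "3 * a^2 \<in> range to_fract" using closed(3)[OF three_A closed(5)[OF a]] .
  have "3 * a^2 - 3 * ?C * b * c \<in> range to_fract" using coeffs[of 1] by (simp add: cube_charpoly_def)
  from closed(2)[OF a2 this] have "3 * (?C * b * c) \<in> range to_fract" by (simp add: algebra_simps)
  then have bc: "?C * b * c \<in> range to_fract" by (rule three_times_in_range_to_fract[OF three])
  have "- cube_norm ?C (a, b, c) \<in> range to_fract" using coeffs[of 0] by (simp add: cube_charpoly_def)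
  from closed(1)[OF closed(2)[OF closed(4)[OF this] closed(5)[OF a, of 3]] closed(3)[OF closed(3)[OF three_A a] bc]]
  have "?C * b^3 + ?C^2 * c^3 \<in> range to_fract" by (simp add: cube_norm_def algebra_simps)
  with cube_coords_in_range_to_fract[OF Q bc] a show ?thesis by blast
qed

lemma cube_poly_to_fract3_integral: "cube_poly (to_fract3 u) \<in> integral_closure (pure_cubic (to_fract Q))"
  unfolding integral_closure_iff
proof (intro conjI exI)
  show "pcompose (fract_poly (cube_charpoly Q u)) (cube_poly (to_fract3 u)) mod pure_cubic (to_fract Q) = 0"
    by (simp add: fract_poly_cube_charpoly cube_charpoly_root)
qed (simp add: degree_cube_poly, rule lead_coeff_cube_charpoly)

lemma integral_closure_pure_cubic:
  "integral_closure (pure_cubic (to_fract Q)) = range (\<lambda>u. cube_poly (to_fract3 u))"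
proof (intro equalityI subsetI)
  fix \<beta> assume \<beta>: "\<beta> \<in> integral_closure (pure_cubic (to_fract Q))"
  then have "degree \<beta> < 3" by (simp add: integral_closure_iff)
  define a b c where "a = coeff \<beta> 0" and "b = coeff \<beta> 1" and "c = coeff \<beta> 2"
  have \<beta>_eq: "\<beta> = cube_poly (a, b, c)"
    unfolding a_def b_def c_def by (rule cube_poly_coeffs) fact
  have coeff_integral: "coeff m i \<in> range to_fract"
    if "irreducible m" "lead_coeff m = 1" "pcompose m \<beta> mod pure_cubic (to_fract Q) = 0" for m i
    using integral_irreducible_coeff_in_range_to_fract[OF \<beta> _ that] by simp
  have "a \<in> range to_fract \<and> b \<in> range to_fract \<and> c \<in> range to_fract"
  proof (cases "b = 0 \<and> c = 0")
    case True
    have "pcompose [:-a, 1:] \<beta> = 0" using True by (simp add: \<beta>_eq cube_poly_def pcompose_pCons)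
    then have "- a \<in> range to_fract"
      using coeff_integral[of "[:-a, 1:]" 0] irreducible_linear_field_poly[of 1 "-a"] by simp
    with True show ?thesis using range_to_fract_closed(4)[of "- a"] by auto
  next
    case False
    let ?m = "cube_charpoly (to_fract Q) (a, b, c)"
    have "irreducible ?m" using False by (intro irreducible_cube_charpoly[OF Q]) auto
    moreover have "pcompose ?m \<beta> mod pure_cubic (to_fract Q) = 0"
      unfolding \<beta>_eq by (rule cube_charpoly_root)
    ultimately show ?thesis
      by (intro cube_coords_in_range_to_fract_of_charpoly coeff_integral) (simp_all only: lead_coeff_cube_charpoly)
  qed
  then obtain p r s where "a = to_fract p" "b = to_fract r" "c = to_fract s" by blast
  then show "\<beta> \<in> range (\<lambda>u. cube_poly (to_fract3 u))"
    by (auto simp: \<beta>_eq to_fract3_def intro!: image_eqI[of _ _ "(p, r, s)"])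
qed (auto intro: cube_poly_to_fract3_integral)

end

section \<open>The discriminant\<close>

lemma ext_trace_pure_cubic:
  fixes C :: "'a::{finite,field} ffrac"
  shows "ext_trace (pure_cubic C) (cube_poly (a, b, c)) = 3 * a"
proof -
  have monom: "monom 1 0 = cube_poly (1, 0, 0)" "monom 1 (Suc 0) = cube_poly (0, 1, 0)"
    "monom 1 (Suc (Suc 0)) = cube_poly (0, 0, 1)"
    by (auto intro!: poly_eqI simp: coeff_monom cube_poly_def coeff_pCons split: nat.splits)
  have "(\<Sum>i<3. f i) = f 0 + f (Suc 0) + f (Suc (Suc 0))" for f :: "nat \<Rightarrow> 'a ffrac"
    by (simp add: numeral_3_eq_3)
  then show ?thesis
    unfolding ext_trace_def degree_pure_cubic
    by (simp only: monom cube_poly_mult_mod) (simp add: cube_mult_def cube_poly_def)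
qed

definition cube_basis :: "nat \<Rightarrow> 'b::{zero,one} poly" where
  "cube_basis i = cube_poly (if i = 0 then (1, 0, 0) else if i = 1 then (0, 1, 0) else (0, 0, 1))"

lemma disc3_pure_cubic:
  fixes C :: "'a::{finite,field} ffrac"
  shows "disc3 (pure_cubic C) cube_basis = - 27 * C^2"
  by (simp add: disc3_def det3_def cube_basis_def cube_poly_mult_mod cube_mult_def ext_trace_pure_cubic
      power2_eq_square)

lemma rel_prime_disc_ideal_pure_cubic:
  fixes Q g :: "'a::{finite,field} poly"
  assumes Q: "irreducible Q" and three: "(3::'a) \<noteq> 0" and "\<not> Q dvd g"
  shows "rel_prime_to (disc_ideal (pure_cubic (to_fract Q))) g"
  unfolding rel_prime_to_def
proof (intro allI impI notI)
  fix p assume p: "irreducible p \<and> p dvd g" and dvd_all: "\<forall>d\<in>disc_ideal (pure_cubic (to_fract Q)). p dvd d"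
  have "cube_basis i \<in> integral_closure (pure_cubic (to_fract Q))" for i
    using cube_poly_to_fract3_integral[OF Q three, of "(1, 0, 0)"]
      cube_poly_to_fract3_integral[OF Q three, of "(0, 1, 0)"]
      cube_poly_to_fract3_integral[OF Q three, of "(0, 0, 1)"]
    by (simp add: cube_basis_def to_fract3_def)
  then have "- 27 * Q^2 \<in> disc_ideal (pure_cubic (to_fract Q))"
    unfolding disc_ideal_def
    by (intro CollectI exI[of _ 1] exI[of _ "\<lambda>_. 1"] exI[of _ "\<lambda>_. cube_basis"])
      (simp add: disc3_pure_cubic)
  with dvd_all have "p dvd 27 * Q^2" by auto
  moreover have "is_unit (27 :: 'a poly)"
  proof -
    have "(27::'a) = 3 * 3 * 3" by simp
    then have "(27::'a) \<noteq> 0" using three by (simp only: mult_eq_0_iff simp_thms)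
    then show ?thesis by (simp add: numeral_poly is_unit_iff_degree)
  qed
  ultimately have "p dvd Q ^ 2" by (simp add: dvd_mult_unit_iff')
  then have "p dvd Q"
    using field_poly_irreducible_imp_prime[of p] p prime_elem_dvd_power by blast
  then have "Q dvd p"
    using irreducibleD'[OF Q] p irreducible_not_unit by blast
  with p \<open>\<not> Q dvd g\<close> show False by (blast intro: dvd_trans)
qed

section \<open>The residue ring \<open>O\<^sub>K / g O\<^sub>K\<close>\<close>

definition mod3 :: "'a::field poly \<Rightarrow> 'a poly \<times> 'a poly \<times> 'a poly \<Rightarrow> 'a poly \<times> 'a poly \<times> 'a poly" where
  "mod3 g u = (case u of (p, r, s) \<Rightarrow> (p mod g, r mod g, s mod g))"

lemma mod3_eq_iff:
  "mod3 g (p, r, s) = mod3 g (p', r', s') \<longleftrightarrow> g dvd p - p' \<and> g dvd r - r' \<and> g dvd s - s'"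
  by (simp add: mod3_def mod_eq_dvd_iff)

lemma mod3_mod3 [simp]: "mod3 g (mod3 g u) = mod3 g u"
  by (cases u) (simp add: mod3_def)

lemma range_mod3:
  assumes "degree g > 0"
  shows "range (mod3 g) = {p. degree p < degree g} \<times> {p. degree p < degree g} \<times> {p. degree p < degree g}"
proof -
  have "degree (p mod g) < degree g" for p
    using assms degree_mod_less'[of g p] by (cases "g = 0"; cases "p mod g = 0") auto
  moreover have "p = p mod g" if "degree p < degree g" for p
    using that by (simp add: mod_poly_less)
  ultimately show ?thesis
    by (fastforce simp: mod3_def image_iff)
qed

definition cube_residue :: "'a::{finite,field} poly \<Rightarrow> 'a poly \<times> 'a poly \<times> 'a poly \<Rightarrow> 'a ffrac poly set" where
  "cube_residue g u = {cube_poly (to_fract3 v) | v. mod3 g v = mod3 g u}"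

lemma cube_residue_self: "cube_poly (to_fract3 u) \<in> cube_residue g u"
  by (cases u) (auto simp: cube_residue_def)

lemma cube_residue_eq_iff: "cube_residue g u = cube_residue g v \<longleftrightarrow> mod3 g u = mod3 g v"
proof
  assume "cube_residue g u = cube_residue g v"
  then have "cube_poly (to_fract3 u) \<in> cube_residue g v" using cube_residue_self by blast
  then show "mod3 g u = mod3 g v" by (auto simp: cube_residue_def)
qed (simp add: cube_residue_def)

context
  fixes Q g :: "'a::{finite,field} poly"
  assumes Q: "irreducible Q" and three: "(3::'a) \<noteq> 0" and dg: "degree g > 0"
begin

abbreviation OK where "OK \<equiv> OK_ring (pure_cubic (to_fract Q))"

abbreviation gOK where "gOK \<equiv> principal_OK (pure_cubic (to_fract Q)) g"

lemma carrier_OK: "carrier OK = range (\<lambda>u. cube_poly (to_fract3 u))"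
  by (simp add: OK_ring_def integral_closure_pure_cubic[OF Q three])

lemma mult_OK: "cube_poly (to_fract3 u) \<otimes>\<^bsub>OK\<^esub> cube_poly (to_fract3 v) = cube_poly (to_fract3 (cube_mult Q u v))"
  by (simp add: OK_ring_def cube_poly_mult_mod cube_mult_to_fract3)

lemma principal_OK_pure_cubic: "gOK = cube_residue g (0, 0, 0)"
proof (intro equalityI subsetI)
  have emb: "(embA g * cube_poly (to_fract3 (p, r, s))) mod pure_cubic (to_fract Q)
      = cube_poly (to_fract3 (g * p, g * r, g * s))" for p r s
  proof -
    have "embA g * cube_poly (to_fract3 (p, r, s)) = cube_poly (to_fract3 (g * p, g * r, g * s))"
      by (simp add: embA_def cube_poly_def to_fract3_def)
    then show ?thesis by (simp add: mod_poly_less degree_cube_poly)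
  qed
  fix x
  show "x \<in> gOK" if "x \<in> cube_residue g (0, 0, 0)"
  proof -
    from that obtain p' r' s' where x: "x = cube_poly (to_fract3 (p', r', s'))"
      and "g dvd p'" "g dvd r'" "g dvd s'"
      by (auto simp: cube_residue_def mod3_eq_iff)
    then obtain p r s where "p' = g * p" "r' = g * r" "s' = g * s" by (auto elim!: dvdE)
    with x emb have "x = (embA g * cube_poly (to_fract3 (p, r, s))) mod pure_cubic (to_fract Q)" by simp
    then show ?thesis by (auto simp: principal_OK_def integral_closure_pure_cubic[OF Q three])
  qed
  show "x \<in> cube_residue g (0, 0, 0)" if "x \<in> gOK"
  proof -
    from that obtain p r s where "x = (embA g * cube_poly (to_fract3 (p, r, s))) mod pure_cubic (to_fract Q)"
      by (auto simp: principal_OK_def integral_closure_pure_cubic[OF Q three])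
    then have "x = cube_poly (to_fract3 (g * p, g * r, g * s))" by (simp add: emb)
    then show ?thesis by (auto simp: cube_residue_def mod3_eq_iff)
  qed
qed

lemma coset_principal_OK: "gOK +>\<^bsub>OK\<^esub> cube_poly (to_fract3 u) = cube_residue g u"
proof -
  obtain p r s where u: "u = (p, r, s)" by (cases u)
  have "(\<lambda>h. h + cube_poly (to_fract3 u)) ` cube_residue g (0, 0, 0) = cube_residue g u"
  proof (intro equalityI subsetI)
    fix x assume "x \<in> (\<lambda>h. h + cube_poly (to_fract3 u)) ` cube_residue g (0, 0, 0)"
    then obtain p' r' s' where x: "x = cube_poly (to_fract3 (p', r', s')) + cube_poly (to_fract3 u)"
      and "mod3 g (p', r', s') = mod3 g (0, 0, 0)"
      by (auto simp: cube_residue_def)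
    then have "mod3 g (p' + p, r' + r, s' + s) = mod3 g u" by (simp add: u mod3_eq_iff)
    moreover have "x = cube_poly (to_fract3 (p' + p, r' + r, s' + s))"
      by (simp add: x u to_fract3_def cube_poly_def)
    ultimately show "x \<in> cube_residue g u" by (auto simp: cube_residue_def)
  next
    fix x assume "x \<in> cube_residue g u"
    then obtain p' r' s' where x: "x = cube_poly (to_fract3 (p', r', s'))"
      and m: "mod3 g (p', r', s') = mod3 g u"
      by (auto simp: cube_residue_def)
    have "x = cube_poly (to_fract3 (p' - p, r' - r, s' - s)) + cube_poly (to_fract3 u)"
      by (simp add: x u to_fract3_def cube_poly_def)
    moreover have "mod3 g (p' - p, r' - r, s' - s) = mod3 g (0, 0, 0)"
      using m by (simp add: u mod3_eq_iff)
    ultimately show "x \<in> (\<lambda>h. h + cube_poly (to_fract3 u)) ` cube_residue g (0, 0, 0)"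
      by (auto simp: cube_residue_def)
  qed
  then show ?thesis
    by (simp add: a_r_coset_def' OK_ring_def principal_OK_pure_cubic UNION_singleton_eq_range)
qed

lemma carrier_residue_ring: "carrier (OK Quot gOK) = range (cube_residue g)"
proof -
  have "carrier (OK Quot gOK) = (\<lambda>a. gOK +>\<^bsub>OK\<^esub> a) ` carrier OK"
    by (auto simp: FactRing_def A_RCOSETS_def')
  then show ?thesis by (simp add: carrier_OK image_image coset_principal_OK)
qed

lemma card_residue_ring: "card (carrier (OK Quot gOK)) = CARD('a) ^ (3 * degree g)"
proof -
  have "range (cube_residue g) = cube_residue g ` range (mod3 g)"
    by (auto simp: image_iff cube_residue_eq_iff) (metis mod3_mod3)
  moreover have "inj_on (cube_residue g) (range (mod3 g))"
    by (auto simp: inj_on_def cube_residue_eq_iff)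
  ultimately have "card (carrier (OK Quot gOK)) = card (range (mod3 g))"
    by (simp add: carrier_residue_ring card_image)
  also have "\<dots> = CARD('a) ^ (3 * degree g)"
    using dg by (simp add: range_mod3 card_cartesian_product card_degree_less power_add[symmetric] numeral_3_eq_3)
  finally show ?thesis .
qed

lemma cube_x_pow_in_residue_power:
  "cube_poly (to_fract3 (cube_x_pow Q n)) \<in> cube_residue g (0, 1, 0) [^]\<^bsub>OK Quot gOK\<^esub> n"
proof (induction n)
  case 0
  have "cube_poly (to_fract3 (1, 0, 0)) = \<one>\<^bsub>OK\<^esub>" by (simp add: OK_ring_def to_fract3_def cube_poly_def)
  then have "\<one>\<^bsub>OK Quot gOK\<^esub> = cube_residue g (1, 0, 0)"
    by (simp add: FactRing_def flip: coset_principal_OK)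
  then show ?case by (simp add: cube_x_pow_def cube_residue_self)
next
  case (Suc n)
  let ?x = "cube_poly (to_fract3 (0, 1, 0))" and ?y = "cube_poly (to_fract3 (cube_x_pow Q n))"
  have "?y \<otimes>\<^bsub>OK\<^esub> ?x \<in> gOK +>\<^bsub>OK\<^esub> (?y \<otimes>\<^bsub>OK\<^esub> ?x)"
    by (simp add: mult_OK coset_principal_OK cube_residue_self)
  moreover have "?x \<in> gOK +>\<^bsub>OK\<^esub> ?x" by (simp add: coset_principal_OK cube_residue_self)
  ultimately have "?y \<otimes>\<^bsub>OK\<^esub> ?x \<in> cube_residue g (0, 1, 0) [^]\<^bsub>OK Quot gOK\<^esub> Suc n"
    using Suc.IH by (auto simp: FactRing_def rcoset_mult_def coset_principal_OK)
  then show ?case by (simp add: mult_OK cube_x_pow_Suc)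
qed

lemma not_carmichael_in_pure_cubic:
  assumes "CARD('a) ^ (3 * degree g) mod 3 = 2"
  shows "\<not> carmichael_in (pure_cubic (to_fract Q)) g"
proof
  define N where "N = CARD('a) ^ (3 * degree g)"
  assume "carmichael_in (pure_cubic (to_fract Q)) g"
  then have "a [^]\<^bsub>OK Quot gOK\<^esub> N = a" if "a \<in> carrier (OK Quot gOK)" for a
    using that by (simp add: carmichael_in_def carmichael_ideal_def carmichael_ring_def card_residue_ring N_def)
  then have "cube_residue g (0, 1, 0) [^]\<^bsub>OK Quot gOK\<^esub> N = cube_residue g (0, 1, 0)"
    by (simp add: carrier_residue_ring)
  then have "cube_poly (to_fract3 (cube_x_pow Q N)) \<in> cube_residue g (0, 1, 0)"
    using cube_x_pow_in_residue_power[of N] by simp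
  moreover have "cube_x_pow Q N = (0, 0, Q ^ (N div 3))" using assms by (simp add: cube_x_pow_def N_def)
  ultimately have "g dvd 1" by (auto simp: cube_residue_def mod3_eq_iff)
  then show False using dg is_unit_iff_degree[of g] by (cases "g = 0") auto
qed

end

section \<open>Non-isomorphic extensions\<close>

text \<open>Since \<open>3 \<noteq> 0\<close> and \<open>Q \<nmid> a\<close>, the polynomial \<open>x\<^sup>3 - a\<close> is separable modulo \<open>Q\<close>, so
  \<open>F\<^sub>q[t][x]/(Q, x\<^sup>3 - a)\<close> has no nonzero nilpotents: an element whose square vanishes modulo \<open>Q\<close>
  vanishes modulo \<open>Q\<close>.\<close>

lemma irreducible_dvd_cube_mult_square:
  fixes Q a p r s :: "'a::field poly"
  assumes Q: "irreducible Q" and "\<not> Q dvd a" and three: "(3::'a) \<noteq> 0"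
    and h1: "Q dvd p^2 + 2*a*r*s" and h2: "Q dvd 2*p*r + a*s^2" and h3: "Q dvd r^2 + 2*p*s"
  shows "Q dvd p \<and> Q dvd r \<and> Q dvd s"
proof -
  have prime: "prime_elem Q" using Q by (rule field_poly_irreducible_imp_prime)
  note prime_dvd = prime_elem_dvd_mult_iff[OF prime] prime_elem_dvd_power_iff[OF prime]
  have unit: "is_unit (numeral k :: 'a poly)" if "(numeral k :: 'a) \<noteq> 0" for k
    using that by (simp add: numeral_poly is_unit_iff_degree)
  show ?thesis
  proof (cases "(2::'a) = 0")
    case True
    then have "(2::'a poly) = 0" by (simp add: numeral_poly)
    with h1 h2 h3 \<open>\<not> Q dvd a\<close> show ?thesis by (simp add: prime_dvd)
  next
    case False
    then have u2: "is_unit (2::'a poly)" by (rule unit)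
    have "(9::'a) = 3 * 3" by simp
    with three have "(9::'a) \<noteq> 0" by (simp only: mult_eq_0_iff simp_thms)
    then have u9: "is_unit (9::'a poly)" by (rule unit)
    define E1 E2 E3 where "E1 = p^2 + 2*a*r*s" and "E2 = 2*p*r + a*s^2" and "E3 = r^2 + 2*p*s"
    have hE: "Q dvd E1" "Q dvd E2" "Q dvd E3" using h1 h2 h3 by (simp_all add: E1_def E2_def E3_def)
    text \<open>Eliminating \<open>s\<close> gives \<open>Q \<mid> 9 r p\<^sup>3\<close> and \<open>Q \<mid> 2 (p\<^sup>3 - a r\<^sup>3)\<close>.\<close>
    have "r * (8*p^3 + a*r^3) = 4*p^2*E2 - a*E3*(E3 - 2*r^2)"
      by (simp add: E2_def E3_def algebra_simps power2_eq_square power3_eq_cube)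
    then have d1: "Q dvd r * (8*p^3 + a*r^3)"
      using dvd_diff[OF dvd_mult[OF hE(2)] dvd_mult2[OF dvd_mult[OF hE(3)]]] by simp
    have "2 * (p^3 - a*r^3) = 2*p*E1 - 2*a*r*E3"
      by (simp add: E1_def E3_def algebra_simps power2_eq_square power3_eq_cube)
    then have "Q dvd 2 * (p^3 - a*r^3)"
      using dvd_diff[OF dvd_mult[OF hE(1)] dvd_mult[OF hE(3)]] by simp
    then have d2: "Q dvd p^3 - a*r^3" by (simp only: dvd_mult_unit_iff'[OF u2])
    have "9 * (r * p^3) = r * (8*p^3 + a*r^3) + r * (p^3 - a*r^3)" by (simp add: algebra_simps)
    then have "Q dvd 9 * (r * p^3)" using dvd_add[OF d1 dvd_mult[OF d2]] by simp
    then have "Q dvd r * p^3" by (simp only: dvd_mult_unit_iff'[OF u9])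
    moreover have "Q dvd p^3 \<longleftrightarrow> Q dvd a * r^3" using dvd_add_right_iff[OF d2, of "a * r^3"] by simp
    ultimately have "Q dvd p" "Q dvd r" using \<open>\<not> Q dvd a\<close> by (auto simp: prime_dvd)
    moreover from this have "Q dvd a * s^2" using h2 by (simp add: dvd_add_right_iff prime_dvd)
    ultimately show ?thesis using \<open>\<not> Q dvd a\<close> by (simp add: prime_dvd)
  qed
qed

lemma no_cube_root_of_irreducible:
  fixes Q Q' :: "'a::field poly"
  assumes Q: "irreducible Q" and "\<not> Q dvd Q'" and three: "(3::'a) \<noteq> 0"
  shows "cube_mult Q' (cube_mult Q' u u) u \<noteq> (Q, 0, 0)"
proof
  assume cube: "cube_mult Q' (cube_mult Q' u u) u = (Q, 0, 0)"
  obtain p r s where u: "u = (p, r, s)" by (cases u)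
  obtain d0 d1 d2 where d: "cube_mult Q' u u = (d0, d1, d2)" by (cases "cube_mult Q' u u")
  text \<open>The square \<open>d = u\<^sup>2\<close> satisfies \<open>d\<^sup>2 = u \<cdot> u\<^sup>3 = Q u \<equiv> 0\<close> modulo \<open>Q\<close>; apply the previous lemma twice.\<close>
  have "cube_mult Q' (d0, d1, d2) (d0, d1, d2) = cube_mult Q' u (cube_mult Q' u (cube_mult Q' u u))"
    unfolding d[symmetric] by (rule cube_mult_assoc)
  also have "\<dots> = cube_mult Q' u (Q, 0, 0)"
    by (simp only: cube_mult_comm[of Q' u "cube_mult Q' u u"] cube)
  also have "\<dots> = (Q * p, Q * r, Q * s)" by (simp add: u cube_mult_def)
  finally have "Q dvd d0^2 + 2*Q'*d1*d2" "Q dvd 2*d0*d1 + Q'*d2^2" "Q dvd d1^2 + 2*d0*d2"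
    by (simp_all add: cube_mult_square)
  then have "Q dvd d0 \<and> Q dvd d1 \<and> Q dvd d2" by (rule irreducible_dvd_cube_mult_square[OF assms])
  then have "Q dvd p^2 + 2*Q'*r*s" "Q dvd 2*p*r + Q'*s^2" "Q dvd r^2 + 2*p*s"
    using d by (simp_all add: u cube_mult_square)
  then have "Q dvd p \<and> Q dvd r \<and> Q dvd s" by (rule irreducible_dvd_cube_mult_square[OF assms])
  then obtain p' r' s' where u': "u = (Q * p', Q * r', Q * s')" by (auto simp: u elim!: dvdE)
  obtain x2 y2 z2 where w2: "cube_mult Q' (p', r', s') (p', r', s') = (x2, y2, z2)"
    by (cases "cube_mult Q' (p', r', s') (p', r', s')")
  obtain x y z where w3: "cube_mult Q' (x2, y2, z2) (p', r', s') = (x, y, z)"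
    by (cases "cube_mult Q' (x2, y2, z2) (p', r', s')")
  have "cube_mult Q' (cube_mult Q' u u) u = (Q*Q*Q*x, Q*Q*Q*y, Q*Q*Q*z)"
    by (simp add: u' cube_mult_scale w2 w3 del: mult_zero_left mult_zero_right)
  with cube have "Q * (Q * (Q * x)) = Q" by (simp add: mult.assoc)
  moreover have "Q \<noteq> 0" using Q by auto
  ultimately have "Q * (Q * x) = 1" by simp
  then have "is_unit Q" by (rule dvdI[OF sym])
  with Q show False by (simp add: irreducible_not_unit)
qed

lemma not_ext_iso_pure_cubic:
  fixes Q Q' :: "'a::{finite,field} poly"
  assumes Q: "irreducible Q" and Q': "irreducible Q'" and "\<not> Q dvd Q'" and three: "(3::'a) \<noteq> 0"
  shows "\<not> ext_iso (pure_cubic (to_fract Q)) (pure_cubic (to_fract Q'))"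
proof
  let ?K = "ext_field (pure_cubic (to_fract Q))" and ?K' = "ext_field (pure_cubic (to_fract Q'))"
  let ?f' = "pure_cubic (to_fract Q')"
  assume "ext_iso (pure_cubic (to_fract Q)) ?f'"
  then obtain \<phi> where "\<phi> \<in> ring_iso ?K ?K'" and fixes_consts: "\<And>c. \<phi> [:c:] = [:c:]"
    by (auto simp: ext_iso_def)
  then have hom: "\<phi> \<in> ring_hom ?K ?K'" by (simp add: ring_iso_def)
  let ?x = "cube_poly (0, 1, 0 :: 'a ffrac)" and ?x2 = "cube_poly (0, 0, 1 :: 'a ffrac)"
  have carrier: "?x \<in> carrier ?K" "?x2 \<in> carrier ?K"
    by (simp_all add: ext_field_def degree_cube_poly)
  have xx: "?x \<otimes>\<^bsub>?K\<^esub> ?x = ?x2" and x2x: "?x2 \<otimes>\<^bsub>?K\<^esub> ?x = [:to_fract Q:]"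
    by (simp_all add: ext_field_def cube_poly_mult_mod cube_mult_def) (simp add: cube_poly_def)
  text \<open>The image \<open>y\<close> of \<open>x\<close> is a cube root of \<open>Q\<close> in \<open>K'\<close>; it is integral, hence lies in \<open>F\<^sub>q[t][x']\<close>.\<close>
  define y where "y = \<phi> ?x"
  have "[:to_fract Q:] = \<phi> (?x2 \<otimes>\<^bsub>?K\<^esub> ?x)" using x2x fixes_consts by simp
  also have "\<dots> = \<phi> (?x \<otimes>\<^bsub>?K\<^esub> ?x) \<otimes>\<^bsub>?K'\<^esub> y"
    using ring_hom_mult[OF hom carrier(2) carrier(1)] xx by (simp add: y_def)
  also have "\<dots> = (y \<otimes>\<^bsub>?K'\<^esub> y) \<otimes>\<^bsub>?K'\<^esub> y"
    using ring_hom_mult[OF hom carrier(1) carrier(1)] by (simp add: y_def)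
  finally have y3: "(y * y mod ?f' * y) mod ?f' = [:to_fract Q:]" by (simp add: ext_field_def)
  have "y \<in> carrier ?K'" using hom carrier(1) by (auto simp: y_def ring_hom_def)
  with y3 have "y \<in> integral_closure ?f'" by (intro cube_root_integral) (simp_all add: ext_field_def)
  then obtain u where "y = cube_poly (to_fract3 u)" using integral_closure_pure_cubic[OF Q' three] by auto
  with y3 have "cube_poly (to_fract3 (cube_mult Q' (cube_mult Q' u u) u)) = cube_poly (to_fract3 (Q, 0, 0))"
    by (simp add: cube_poly_mult_mod cube_mult_to_fract3) (simp add: to_fract3_def cube_poly_def)
  with no_cube_root_of_irreducible[OF Q \<open>\<not> Q dvd Q'\<close> three] show False by simp
qed

lemma three_neq_zero:
  assumes "\<not> 3 dvd CARD('a::{finite,field})"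
  shows "(3::'a) \<noteq> 0"
proof
  assume "(3::'a) = 0"
  then have "CHAR('a) dvd 3" by (metis of_nat_eq_0_iff_char_dvd of_nat_numeral)
  then have "CHAR('a) \<le> 3" "CHAR('a) \<noteq> 2" by (auto dest: dvd_imp_le)
  moreover have "CHAR('a) \<noteq> 0" "CHAR('a) \<noteq> 1" by (simp_all add: finite_imp_CHAR_pos)
  ultimately have "CHAR('a) = 3" by linarith
  with CHAR_dvd_CARD[where 'a = 'a] assms show False by simp
qed

lemma odd_power_mod_3:
  fixes q :: nat
  assumes "q mod 3 = 2" and "odd n"
  shows "q ^ n mod 3 = 2"
proof -
  obtain m where n: "n = Suc (2 * m)" using assms(2) by (metis oddE Suc_eq_plus1)
  have "q ^ 2 mod 3 = 1" using power_mod[of q 3 2] assms(1) by simp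
  then have "(q ^ 2) ^ m mod 3 = 1" using power_mod[of "q ^ 2" 3 m] by simp
  then have "(q * (q ^ 2) ^ m) mod 3 = 2" using assms(1) mod_mult_eq[of q 3 "(q ^ 2) ^ m"] by simp
  then show ?thesis by (simp add: n power_mult)
qed

lemma inj_pure_cubic_to_fract: "inj (\<lambda>Q::'a::idom. pure_cubic (to_fract Q))"
proof (rule injI)
  fix Q Q' :: 'a assume "pure_cubic (to_fract Q) = pure_cubic (to_fract Q')"
  then have "coeff (pure_cubic (to_fract Q)) 0 = coeff (pure_cubic (to_fract Q')) 0" by simp
  then show "Q = Q'" by (simp add: pure_cubic_def)
qed

theorem theorem5p2:
  fixes g :: "'a::{finite,field} poly"
  assumes "squarefree g" and "odd (degree g)"
    and "\<not> 3 dvd CARD('a)" and "\<not> 3 dvd (CARD('a) - 1)"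
  shows "\<exists>F :: 'a ffrac poly set. infinite F \<and>
    (\<forall>f\<in>F. cubic_poly f \<and> rel_prime_to (disc_ideal f) g \<and> \<not> carmichael_in f g) \<and>
    (\<forall>f\<in>F. \<forall>h\<in>F. f \<noteq> h \<longrightarrow> \<not> ext_iso f h)"
proof -
  have three: "(3::'a) \<noteq> 0" using assms(3) by (rule three_neq_zero)
  have dg: "degree g > 0" using assms(2) by (auto elim: oddE)
  have "CARD('a) mod 3 = 2" using assms(3,4) zero_less_card_finite[where 'a = 'a] by presburger
  then have N: "CARD('a) ^ (3 * degree g) mod 3 = 2" using assms(2) by (simp add: odd_power_mod_3)
  define Qs where "Qs = {Q :: 'a poly. irreducible Q \<and> lead_coeff Q = 1 \<and> \<not> Q dvd g}"
  have "infinite Qs" unfolding Qs_def using dg by (intro infinite_monic_irreducible_not_dvd) auto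
  then have "infinite ((\<lambda>Q. pure_cubic (to_fract Q)) ` Qs)"
    using inj_pure_cubic_to_fract by (auto dest: finite_imageD inj_on_subset)
  moreover have "cubic_poly f \<and> rel_prime_to (disc_ideal f) g \<and> \<not> carmichael_in f g"
    if "f \<in> (\<lambda>Q. pure_cubic (to_fract Q)) ` Qs" for f
    using that irreducible_pure_cubic rel_prime_disc_ideal_pure_cubic[OF _ three]
      not_carmichael_in_pure_cubic[OF _ three dg N]
    by (auto simp: Qs_def cubic_poly_def)
  moreover have "\<not> ext_iso (pure_cubic (to_fract Q)) (pure_cubic (to_fract Q'))"
    if "Q \<in> Qs" "Q' \<in> Qs" "Q \<noteq> Q'" for Q Q'
  proof -
    have "\<not> Q dvd Q'" using that monic_irreducible_dvd_imp_eq[of Q Q'] by (auto simp: Qs_def)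
    with that show ?thesis using not_ext_iso_pure_cubic[OF _ _ _ three] by (auto simp: Qs_def)
  qed
  ultimately show ?thesis by (intro exI[of _ "(\<lambda>Q. pure_cubic (to_fract Q)) ` Qs"]) blast
qed

end
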